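(* Let $G=(V,E,w)$ be a connected weighted graph with $n$ vertices, let $e\in E$, and let $k\in\mathbb{R}$. Then $$ \sum_{\{s,t\}\subseteq V}\Big((\widetilde\partial 1_e)^{T}(L^{+})^{k}(1_s-1_t)\Big)^{2}=n\cdot w_e\cdot\big(H^{(2k)}_{e}\big)^{2}, $$ where the sum is over unordered pairs of distinct vertices.
   Context: $G=(V,E,w)$ is undirected with positive edge weights. Each edge is given an arbitrary fixed orientation; the boundary matrix $\partial\in\mathbb{R}^{|V|\times|E|}$ has column $\partial 1_e=1_s-1_t$ for $e=(s,t)$, where $1_x$ is the indicator vector of $x$. $W$ is the diagonal weight matrix, $\widetilde\partial=\partial W^{1/2}$, and $L=\widetilde\partial\widetilde\partial^{T}$ is the graph Laplacian with spectral decomposition $L=\sum_i\lambda_i x_ix_i^{T}$. For $k\in\mathbb{R}$, $(L^{+})^{k}:=\sum_{i:\lambda_i>0}\lambda_i^{-k}x_ix_i^{T}$ (so $(L^+)^0$ is the orthogonal projection onto $\mathrm{im}(L)$). The $k$-harmonic distance is $H^{(k)}_{st}=\sqrt{(1_s-1_t)^{T}(L^{+})^{k}(1_s-1_t)}$, and $H^{(k)}_e:=H^{(k)}_{st}$ for $e=\{s,t\}$. *)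

theory Defs
  imports "HOL-Analysis.Analysis"
begin

text \<open>Weighted graph: vertices = finite type 'v, edges = finite type 'e, each edge e
  carries a fixed orientation (src e, tgt e) and a weight w e.\<close>

definition ind :: "'a::finite \<Rightarrow> real ^ 'a" where
  "ind a = (\<chi> b. if b = a then 1 else 0)"

definition boundary :: "('e \<Rightarrow> 'v) \<Rightarrow> ('e \<Rightarrow> 'v) \<Rightarrow> real ^ 'e ^ 'v" where
  "boundary src tgt = (\<chi> v e. (if v = src e then 1 else 0) - (if v = tgt e then 1 else 0))"

definition sqrt_weight :: "('e::finite \<Rightarrow> real) \<Rightarrow> real ^ 'e ^ 'e" where
  "sqrt_weight w = (\<chi> i j. if i = j then sqrt (w i) else 0)"

definition wboundary :: "('e::finite \<Rightarrow> 'v::finite) \<Rightarrow> ('e \<Rightarrow> 'v) \<Rightarrow> ('e \<Rightarrow> real) \<Rightarrow> real ^ 'e ^ 'v" where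
  "wboundary src tgt w = boundary src tgt ** sqrt_weight w"

definition laplacian :: "('e::finite \<Rightarrow> 'v::finite) \<Rightarrow> ('e \<Rightarrow> 'v) \<Rightarrow> ('e \<Rightarrow> real) \<Rightarrow> real ^ 'v ^ 'v" where
  "laplacian src tgt w = wboundary src tgt w ** transpose (wboundary src tgt w)"

definition outer :: "real ^ 'n \<Rightarrow> real ^ 'n \<Rightarrow> real ^ 'n ^ 'n" where
  "outer x y = (\<chi> i j. x $ i * y $ j)"

definition spectral_decomp :: "real ^ 'v ^ 'v \<Rightarrow> ('v::finite \<Rightarrow> real) \<Rightarrow> ('v \<Rightarrow> real ^ 'v) \<Rightarrow> bool" where
  "spectral_decomp L lam x \<longleftrightarrow>
     (\<forall>i j. x i \<bullet> x j = (if i = j then 1 else 0)) \<and>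
     L = (\<Sum>i\<in>UNIV. lam i *\<^sub>R outer (x i) (x i))"

definition pinv_pow :: "('v::finite \<Rightarrow> real) \<Rightarrow> ('v \<Rightarrow> real ^ 'v) \<Rightarrow> real \<Rightarrow> real ^ 'v ^ 'v" where
  "pinv_pow lam x k = (\<Sum>i\<in>{i. lam i > 0}. (lam i powr (- k)) *\<^sub>R outer (x i) (x i))"

definition harmonic_dist :: "('v::finite \<Rightarrow> real) \<Rightarrow> ('v \<Rightarrow> real ^ 'v) \<Rightarrow> real \<Rightarrow> 'v \<Rightarrow> 'v \<Rightarrow> real" where
  "harmonic_dist lam x k s t =
     sqrt ((ind s - ind t) \<bullet> (pinv_pow lam x k *v (ind s - ind t)))"

definition connected_graph :: "('e \<Rightarrow> 'v) \<Rightarrow> ('e \<Rightarrow> 'v) \<Rightarrow> bool" where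
  "connected_graph src tgt \<longleftrightarrow>
     (\<forall>s t. (s, t) \<in> ({(src e, tgt e) | e. True} \<union> {(tgt e, src e) | e. True})\<^sup>*)"

end

theory Submission
  imports Defs
begin

text \<open>
  Let \<open>P = (L\<^sup>+)\<^sup>k\<close> and \<open>Y = P b\<close> with \<open>b = \<partial>\<^sub>w 1\<^sub>e = sqrt (w\<^sub>e) (1\<^sub>s - 1\<^sub>t)\<close>.
  As \<open>P\<close> is symmetric, the summand for \<open>{s, t}\<close> is \<open>(Y\<^sub>s - Y\<^sub>t)\<^sup>2\<close>, and summing over all
  pairs gives \<open>n |Y|\<^sup>2 - (\<Sum>\<^sub>s Y\<^sub>s)\<^sup>2\<close>. The range of \<open>P\<close> is spanned by eigenvectors with
  positive eigenvalue, which are orthogonal to the all-ones vector since \<open>1\<^sup>T L = 0\<close>; hence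
  \<open>\<Sum>\<^sub>s Y\<^sub>s = 0\<close>. Finally \<open>P P = (L\<^sup>+)\<^sup>2\<^sup>k\<close>, so \<open>|Y|\<^sup>2 = w\<^sub>e (H\<^sup>2\<^sup>k\<^sub>e)\<^sup>2\<close>.
\<close>

lemma sum_pairs_less_square_diff:
  fixes f :: "'a::{finite,linorder} \<Rightarrow> real"
  shows "(\<Sum>(s, t)\<in>{(s, t). s < t}. (f s - f t)\<^sup>2)
         = real CARD('a) * (\<Sum>s\<in>UNIV. (f s)\<^sup>2) - (\<Sum>s\<in>UNIV. f s)\<^sup>2"
proof -
  let ?g = "\<lambda>(s::'a, t). (f s - f t)\<^sup>2"
  have all_pairs: "(\<Sum>p\<in>UNIV. ?g p)
      = 2 * real CARD('a) * (\<Sum>s\<in>UNIV. (f s)\<^sup>2) - 2 * (\<Sum>s\<in>UNIV. f s)\<^sup>2"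
  proof -
    have "(\<Sum>p\<in>UNIV. ?g p) = (\<Sum>s\<in>UNIV. \<Sum>t\<in>UNIV. (f s)\<^sup>2 + (f t)\<^sup>2 - 2 * f s * f t)"
      unfolding UNIV_Times_UNIV[symmetric] sum.cartesian_product[symmetric]
      by (simp add: power2_diff)
    also have "\<dots> = 2 * real CARD('a) * (\<Sum>s\<in>UNIV. (f s)\<^sup>2) - 2 * (\<Sum>s\<in>UNIV. f s)\<^sup>2"
      by (simp add: sum.distrib sum_subtractf sum_distrib_left sum_distrib_right power2_eq_square
          mult.assoc sum_product) (simp add: ac_simps)
    finally show ?thesis .
  qed
  have UNIV_split: "(UNIV :: ('a \<times> 'a) set) = {(s, t). s < t} \<union> {(s, t). t < s} \<union> {(s, t). s = t}"
    by auto
  have "(\<Sum>p\<in>UNIV. ?g p) = (\<Sum>p\<in>{(s, t). s < t}. ?g p) + (\<Sum>p\<in>{(s, t). t < s}. ?g p)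
      + (\<Sum>p\<in>{(s, t). s = t}. ?g p)"
    unfolding UNIV_split by (subst sum.union_disjoint; (auto)?; subst sum.union_disjoint; auto)
  moreover have "(\<Sum>p\<in>{(s, t). t < s}. ?g p) = (\<Sum>p\<in>{(s, t). s < t}. ?g p)"
    by (rule sum.reindex_bij_witness[of _ prod.swap prod.swap]) (auto simp: power2_commute)
  moreover have "(\<Sum>p\<in>{(s, t). s = t}. ?g p) = 0"
    by (rule sum.neutral) auto
  ultimately show ?thesis
    using all_pairs by simp
qed

lemma inner_orthonormal_sum_right:
  fixes x :: "'i \<Rightarrow> 'a::real_inner"
  assumes "finite I" and "\<forall>i j. x i \<bullet> x j = (if i = j then 1 else 0)"
  shows "x j \<bullet> (\<Sum>i\<in>I. a i *\<^sub>R x i) = (if j \<in> I then a j else 0)"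
  using assms(1) by (simp add: inner_sum_right assms(2) if_distrib[of "\<lambda>c. _ * c"] cong: if_cong)

lemma inner_orthonormal_sums:
  fixes x :: "'i \<Rightarrow> 'a::real_inner"
  assumes "finite I" and "\<forall>i j. x i \<bullet> x j = (if i = j then 1 else 0)"
  shows "(\<Sum>i\<in>I. a i *\<^sub>R x i) \<bullet> (\<Sum>i\<in>I. b i *\<^sub>R x i) = (\<Sum>i\<in>I. a i * b i)"
  using assms by (simp add: inner_sum_left inner_orthonormal_sum_right cong: sum.cong)

lemma inner_ind: "y \<bullet> ind s = y $ s"
  by (simp add: inner_vec_def ind_def if_distrib cong: if_cong)

lemma matrix_vector_mult_ind: "(A *v ind j) $ i = A $ i $ j"
  by (simp add: matrix_vector_mult_def ind_def if_distrib cong: if_cong)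

lemma outer_sum_mult_vector:
  "(\<Sum>i\<in>I. c i *\<^sub>R outer (x i) (x i)) *v v = (\<Sum>i\<in>I. (c i * (x i \<bullet> v)) *\<^sub>R x i)"
  by (simp add: vec_eq_iff matrix_vector_mult_def outer_def inner_vec_def sum_distrib_left
      sum_distrib_right sum.swap[of _ I] ac_simps)

lemma pinv_pow_mult_vector:
  "pinv_pow lam x k *v v = (\<Sum>i\<in>{i. lam i > 0}. (lam i powr (- k) * (x i \<bullet> v)) *\<^sub>R x i)"
  unfolding pinv_pow_def by (rule outer_sum_mult_vector)

lemma inner_pinv_pow_commute: "u \<bullet> (pinv_pow lam x k *v v) = (pinv_pow lam x k *v u) \<bullet> v"
  by (simp add: pinv_pow_mult_vector inner_sum_left inner_sum_right inner_commute ac_simps)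

lemma inner_pinv_pow_self:
  assumes "\<forall>i j. x i \<bullet> x j = (if i = j then 1 else 0)"
  shows "(pinv_pow lam x k *v v) \<bullet> (pinv_pow lam x k *v v) = v \<bullet> (pinv_pow lam x (2 * k) *v v)"
proof -
  have "(pinv_pow lam x k *v v) \<bullet> (pinv_pow lam x k *v v)
      = (\<Sum>i\<in>{i. lam i > 0}. (lam i powr (- k) * (x i \<bullet> v)) * (lam i powr (- k) * (x i \<bullet> v)))"
    unfolding pinv_pow_mult_vector using assms by (simp add: inner_orthonormal_sums)
  also have "\<dots> = (\<Sum>i\<in>{i. lam i > 0}. lam i powr (- (2 * k)) * (x i \<bullet> v) * (x i \<bullet> v))"
    by (rule sum.cong) (auto simp: powr_add[symmetric])
  also have "\<dots> = v \<bullet> (pinv_pow lam x (2 * k) *v v)"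
    by (simp add: pinv_pow_mult_vector inner_sum_right inner_commute ac_simps)
  finally show ?thesis .
qed

lemma harmonic_dist_double_sq:
  assumes "\<forall>i j. x i \<bullet> x j = (if i = j then 1 else 0)"
  shows "(harmonic_dist lam x (2 * k) s t)\<^sup>2
         = (pinv_pow lam x k *v (ind s - ind t)) \<bullet> (pinv_pow lam x k *v (ind s - ind t))"
  unfolding harmonic_dist_def inner_pinv_pow_self[OF assms, symmetric] by simp

lemma spectral_decomp_eigenvector:
  assumes "spectral_decomp L lam x"
  shows "L *v x j = lam j *\<^sub>R x j"
proof -
  have orthonormal: "\<forall>i j. x i \<bullet> x j = (if i = j then 1 else 0)"
    and L_eq: "L = (\<Sum>i\<in>UNIV. lam i *\<^sub>R outer (x i) (x i))"
    using assms unfolding spectral_decomp_def by auto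
  have "L *v x j = (\<Sum>i\<in>UNIV. if i = j then lam j *\<^sub>R x j else 0)"
    unfolding L_eq outer_sum_mult_vector by (rule sum.cong) (auto simp: orthonormal)
  then show ?thesis
    by simp
qed

lemma inner_pinv_pow_left_null:
  assumes "spectral_decomp L lam x" and "z v* L = 0"
  shows "z \<bullet> (pinv_pow lam x k *v v) = 0"
proof -
  have "z \<bullet> x i = 0" if "lam i > 0" for i
  proof -
    have "lam i * (z \<bullet> x i) = z \<bullet> (L *v x i)"
      by (simp add: spectral_decomp_eigenvector[OF assms(1)])
    also have "\<dots> = 0"
      by (simp add: dot_lmul_matrix[symmetric] assms(2))
    finally show ?thesis
      using that by simp
  qed
  then show ?thesis
    by (simp add: pinv_pow_mult_vector inner_sum_right)
qed

lemma wboundary_entry: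
  "wboundary src tgt w $ v $ f
   = ((if v = src f then 1 else 0) - (if v = tgt f then 1 else 0)) * sqrt (w f)"
  unfolding wboundary_def matrix_matrix_mult_def boundary_def sqrt_weight_def vec_lambda_beta
  by (simp add: if_distrib[of "\<lambda>c. _ * c"] cong: if_cong)

lemma wboundary_mult_ind: "wboundary src tgt w *v ind e = sqrt (w e) *\<^sub>R (ind (src e) - ind (tgt e))"
  unfolding vec_eq_iff matrix_vector_mult_ind wboundary_entry by (simp add: ind_def)

lemma vec_one_mult_wboundary: "vec 1 v* wboundary src tgt w = 0"
  by (simp add: vec_eq_iff vector_matrix_mult_def wboundary_entry sum_subtractf
      sum_distrib_right[symmetric])

lemma vec_one_mult_laplacian: "vec 1 v* laplacian src tgt w = 0"
  unfolding laplacian_def vector_matrix_mul_assoc[symmetric] vec_one_mult_wboundary by simp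

theorem theorem6p1:
  fixes src tgt :: "'e::finite \<Rightarrow> 'v::{finite,linorder}"
    and w :: "'e \<Rightarrow> real"
    and lam :: "'v \<Rightarrow> real" and x :: "'v \<Rightarrow> real ^ ('v::{finite,linorder})"
    and e :: 'e and k :: real
  assumes no_loops: "\<And>f. src f \<noteq> tgt f"
    and simple: "inj (\<lambda>f. {src f, tgt f})"
    and pos: "\<And>f. w f > 0"
    and conn: "connected_graph src tgt"
    and spec: "spectral_decomp (laplacian src tgt w) lam x"
  shows "(\<Sum>(s, t)\<in>{(s, t). s < t}.
            ((wboundary src tgt w *v ind e) \<bullet> (pinv_pow lam x k *v (ind s - ind t)))\<^sup>2)
         = real CARD('v) * w e * (harmonic_dist lam x (2 * k) (src e) (tgt e))\<^sup>2"
proof -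
  have orthonormal: "\<forall>i j. x i \<bullet> x j = (if i = j then 1 else 0)"
    using spec unfolding spectral_decomp_def by auto
  define P where "P = pinv_pow lam x k"
  define Y where "Y = P *v (wboundary src tgt w *v ind e)"
  have summand: "(wboundary src tgt w *v ind e) \<bullet> (P *v (ind s - ind t)) = Y $ s - Y $ t" for s t
    by (simp add: P_def Y_def inner_pinv_pow_commute inner_diff_right inner_ind)
  have sum_Y: "(\<Sum>s\<in>UNIV. Y $ s) = 0"
    using inner_pinv_pow_left_null[OF spec vec_one_mult_laplacian]
    by (simp add: P_def Y_def inner_vec_def)
  have sum_Y_sq: "(\<Sum>s\<in>UNIV. (Y $ s)\<^sup>2) = w e * (harmonic_dist lam x (2 * k) (src e) (tgt e))\<^sup>2"
  proof -
    have "(\<Sum>s\<in>UNIV. (Y $ s)\<^sup>2) = Y \<bullet> Y"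
      by (simp add: inner_vec_def power2_eq_square)
    also have "\<dots> = w e * (harmonic_dist lam x (2 * k) (src e) (tgt e))\<^sup>2"
      using pos[of e]
      by (simp add: Y_def P_def wboundary_mult_ind matrix_vector_mult_scaleR
          harmonic_dist_double_sq[OF orthonormal])
    finally show ?thesis .
  qed
  show ?thesis
    unfolding P_def[symmetric] summand sum_pairs_less_square_diff sum_Y sum_Y_sq by simp
qed

end
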